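(* There is an algorithm that, given an arbitrary temporal star $(G_s,L)$ on $n$ vertices in which every edge has at most $3$ labels, decides in $O(n\log n)$ time whether $(G_s,L)$ is explorable (i.e.\ solves \textsc{StarExp(3)}).
   Context: A temporal graph is a pair $(G,L)$ where $G=(V,E)$ is a graph and $L:E\to 2^{\mathbb{N}}$ assigns to each edge a set of positive integer labels (the discrete times at which the edge is available). A temporal star is a temporal graph whose underlying graph $G_s$ is a star with center $c$ and $n-1$ leaves. A time edge is a triple $(u,v,l)$ with $\{u,v\}\in E$ and $l\in L(\{u,v\})$. A journey from $u$ to $v$ is a sequence of time edges $(u,u_1,l_1),(u_1,u_2,l_2),\dots,(u_{r-1},v,l_r)$ with $l_1<l_2<\dots<l_r$. The temporal star $(G_s,L)$ is explorable if there is a journey starting and ending at the center $c$ that visits every vertex of $G_s$. The decision problem \textsc{StarExp($k$)} takes as input a temporal star in which every edge has at most $k$ labels and asks whether it is explorable. *)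

theory Defs
  imports Complex_Main
begin

definition temporal_graph :: "'v set \<Rightarrow> 'v set set \<Rightarrow> ('v set \<Rightarrow> nat set) \<Rightarrow> bool" where
  "temporal_graph V E L \<longleftrightarrow>
     (\<forall>e\<in>E. \<exists>u v. u \<in> V \<and> v \<in> V \<and> u \<noteq> v \<and> e = {u, v}) \<and>
     (\<forall>e\<in>E. \<forall>l\<in>L e. 0 < l)"

definition time_edge :: "'v set set \<Rightarrow> ('v set \<Rightarrow> nat set) \<Rightarrow> 'v \<times> 'v \<times> nat \<Rightarrow> bool" where
  "time_edge E L te \<longleftrightarrow> (case te of (u, v, l) \<Rightarrow> {u, v} \<in> E \<and> l \<in> L {u, v})"

definition journey :: "'v set set \<Rightarrow> ('v set \<Rightarrow> nat set) \<Rightarrow> 'v \<Rightarrow> 'v \<Rightarrow> ('v \<times> 'v \<times> nat) list \<Rightarrow> bool" where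
  "journey E L u v js \<longleftrightarrow>
     js \<noteq> [] \<and>
     (\<forall>i < length js. time_edge E L (js ! i)) \<and>
     fst (js ! 0) = u \<and>
     fst (snd (js ! (length js - 1))) = v \<and>
     (\<forall>i. Suc i < length js \<longrightarrow>
          fst (snd (js ! i)) = fst (js ! Suc i) \<and>
          snd (snd (js ! i)) < snd (snd (js ! Suc i)))"

definition visited :: "('v \<times> 'v \<times> nat) list \<Rightarrow> 'v set" where
  "visited js = {u. \<exists>te \<in> set js. u = fst te \<or> u = fst (snd te)}"

definition explorable :: "'v set \<Rightarrow> 'v set set \<Rightarrow> ('v set \<Rightarrow> nat set) \<Rightarrow> 'v \<Rightarrow> bool" where
  "explorable V E L c \<longleftrightarrow> (\<exists>js. journey E L c c js \<and> V \<subseteq> visited js)"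

text \<open>An input instance is a list ls of label lists. It describes the temporal star on
  n = length ls + 1 vertices: center 0, leaves 1..n-1, edge {0,i} carrying the labels
  set (ls ! (i-1)).\<close>

definition star_V :: "nat list list \<Rightarrow> nat set" where
  "star_V ls = {0 .. length ls}"

definition star_E :: "nat list list \<Rightarrow> nat set set" where
  "star_E ls = {{0, i} | i. 1 \<le> i \<and> i \<le> length ls}"

definition star_L :: "nat list list \<Rightarrow> nat set \<Rightarrow> nat set" where
  "star_L ls e = (if (\<exists>i. 1 \<le> i \<and> i \<le> length ls \<and> e = {0, i})
                  then set (ls ! ((THE i. 1 \<le> i \<and> i \<le> length ls \<and> e = {0, i}) - 1)) else {})"

definition star_input :: "nat \<Rightarrow> nat list list \<Rightarrow> bool" where
  "star_input k ls \<longleftrightarrow> ls \<noteq> [] \<and>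
     (\<forall>x \<in> set ls. distinct x \<and> length x \<le> k \<and> (\<forall>l \<in> set x. 0 < l))"

datatype val = VNat nat | VNil | VCons val val

datatype exp =
    Var nat            \<comment> \<open>i-th entry of the environment (the function arguments / let-bound values)\<close>
  | Const nat
  | ENil
  | ECons exp exp
  | Hd exp
  | Tl exp
  | IsNil exp
  | Plus exp exp
  | Minus exp exp      \<comment> \<open>truncated subtraction\<close>
  | Less exp exp
  | Eq exp exp
  | If exp exp exp     \<comment> \<open>condition VNat 0 is false, any other VNat true\<close>
  | Let exp exp        \<comment> \<open>evaluates the first, pushes it on the environment\<close>
  | Call nat "exp list" \<comment> \<open>call function number f of the program with the given arguments\<close>

type_synonym prog = "exp list"

definition bool_val :: "bool \<Rightarrow> val" where
  "bool_val b = VNat (if b then 1 else 0)"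

inductive eval :: "prog \<Rightarrow> val list \<Rightarrow> exp \<Rightarrow> val \<Rightarrow> nat \<Rightarrow> bool"
  and evals :: "prog \<Rightarrow> val list \<Rightarrow> exp list \<Rightarrow> val list \<Rightarrow> nat \<Rightarrow> bool"
  for P :: prog where
  "i < length env \<Longrightarrow> eval P env (Var i) (env ! i) 1"
| "eval P env (Const n) (VNat n) 1"
| "eval P env ENil VNil 1"
| "eval P env a x t1 \<Longrightarrow> eval P env b y t2 \<Longrightarrow> eval P env (ECons a b) (VCons x y) (Suc (t1 + t2))"
| "eval P env a (VCons x y) t \<Longrightarrow> eval P env (Hd a) x (Suc t)"
| "eval P env a (VCons x y) t \<Longrightarrow> eval P env (Tl a) y (Suc t)"
| "eval P env a x t \<Longrightarrow> eval P env (IsNil a) (bool_val (x = VNil)) (Suc t)"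
| "eval P env a (VNat m) t1 \<Longrightarrow> eval P env b (VNat n) t2 \<Longrightarrow> eval P env (Plus a b) (VNat (m + n)) (Suc (t1 + t2))"
| "eval P env a (VNat m) t1 \<Longrightarrow> eval P env b (VNat n) t2 \<Longrightarrow> eval P env (Minus a b) (VNat (m - n)) (Suc (t1 + t2))"
| "eval P env a (VNat m) t1 \<Longrightarrow> eval P env b (VNat n) t2 \<Longrightarrow> eval P env (Less a b) (bool_val (m < n)) (Suc (t1 + t2))"
| "eval P env a (VNat m) t1 \<Longrightarrow> eval P env b (VNat n) t2 \<Longrightarrow> eval P env (Eq a b) (bool_val (m = n)) (Suc (t1 + t2))"
| "eval P env c (VNat m) t1 \<Longrightarrow> m \<noteq> 0 \<Longrightarrow> eval P env a x t2 \<Longrightarrow> eval P env (If c a b) x (Suc (t1 + t2))"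
| "eval P env c (VNat 0) t1 \<Longrightarrow> eval P env b x t2 \<Longrightarrow> eval P env (If c a b) x (Suc (t1 + t2))"
| "eval P env a x t1 \<Longrightarrow> eval P (x # env) b y t2 \<Longrightarrow> eval P env (Let a b) y (Suc (t1 + t2))"
| "f < length P \<Longrightarrow> evals P env as vs t1 \<Longrightarrow> eval P vs (P ! f) y t2 \<Longrightarrow> eval P env (Call f as) y (Suc (t1 + t2))"
| "evals P env [] [] 0"
| "eval P env a x t1 \<Longrightarrow> evals P env as xs t2 \<Longrightarrow> evals P env (a # as) (x # xs) (t1 + t2)"

definition run :: "prog \<Rightarrow> val \<Rightarrow> val \<Rightarrow> nat \<Rightarrow> bool" where
  "run P x v t \<longleftrightarrow> P \<noteq> [] \<and> eval P [x] (P ! 0) v t"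

definition enc_list :: "val list \<Rightarrow> val" where
  "enc_list xs = foldr VCons xs VNil"

definition enc_input :: "nat list list \<Rightarrow> val" where
  "enc_input ls = enc_list (map (\<lambda>x. enc_list (map VNat x)) ls)"

end

theory Submission
  imports Defs "HOL-Library.Log_Nat" "HOL-Combinatorics.Permutations"
begin

(* With at most three labels on an edge, a leaf i can only be visited by a round trip
   (0, i, a), (i, 0, b) with labels a < b of i, and every such interval [a, b] contains the
   second smallest label of i. Hence the round trips of an exploring journey are disjoint
   intervals ordered like these middle labels, so one may visit the leaves in that order,
   each time returning to the centre as early as possible: this greedy scan succeeds iff the
   star is explorable. The algorithm sorts the labels of every edge, merge-sorts the leaves by
   middle label and runs the scan; in the unit-cost machine model the merge sort costs
   O(n log n) and everything else O(n). *)

section \<open>Symbolic execution of programs\<close>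

fun exec_exp :: "(nat \<Rightarrow> val list \<Rightarrow> (val \<times> nat) option) \<Rightarrow> val list \<Rightarrow> exp \<Rightarrow>
    (val \<times> nat) option"
and exec_exps :: "(nat \<Rightarrow> val list \<Rightarrow> (val \<times> nat) option) \<Rightarrow> val list \<Rightarrow> exp list \<Rightarrow>
    (val list \<times> nat) option"
where
  "exec_exp C env (Var i) = (if i < length env then Some (env ! i, 1) else None)"
| "exec_exp C env (Const n) = Some (VNat n, 1)"
| "exec_exp C env ENil = Some (VNil, 1)"
| "exec_exp C env (ECons a b) = (case exec_exp C env a of
      Some (x, t1) \<Rightarrow> (case exec_exp C env b of
        Some (y, t2) \<Rightarrow> Some (VCons x y, Suc (t1 + t2)) | None \<Rightarrow> None)
    | None \<Rightarrow> None)"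
| "exec_exp C env (Hd a) = (case exec_exp C env a of
      Some (VCons x y, t) \<Rightarrow> Some (x, Suc t) | _ \<Rightarrow> None)"
| "exec_exp C env (Tl a) = (case exec_exp C env a of
      Some (VCons x y, t) \<Rightarrow> Some (y, Suc t) | _ \<Rightarrow> None)"
| "exec_exp C env (IsNil a) = (case exec_exp C env a of
      Some (x, t) \<Rightarrow> Some (bool_val (x = VNil), Suc t) | None \<Rightarrow> None)"
| "exec_exp C env (Plus a b) = (case exec_exp C env a of
      Some (VNat m, t1) \<Rightarrow> (case exec_exp C env b of
        Some (VNat n, t2) \<Rightarrow> Some (VNat (m + n), Suc (t1 + t2)) | _ \<Rightarrow> None)
    | _ \<Rightarrow> None)"
| "exec_exp C env (Minus a b) = (case exec_exp C env a of
      Some (VNat m, t1) \<Rightarrow> (case exec_exp C env b of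
        Some (VNat n, t2) \<Rightarrow> Some (VNat (m - n), Suc (t1 + t2)) | _ \<Rightarrow> None)
    | _ \<Rightarrow> None)"
| "exec_exp C env (Less a b) = (case exec_exp C env a of
      Some (VNat m, t1) \<Rightarrow> (case exec_exp C env b of
        Some (VNat n, t2) \<Rightarrow> Some (bool_val (m < n), Suc (t1 + t2)) | _ \<Rightarrow> None)
    | _ \<Rightarrow> None)"
| "exec_exp C env (Eq a b) = (case exec_exp C env a of
      Some (VNat m, t1) \<Rightarrow> (case exec_exp C env b of
        Some (VNat n, t2) \<Rightarrow> Some (bool_val (m = n), Suc (t1 + t2)) | _ \<Rightarrow> None)
    | _ \<Rightarrow> None)"
| "exec_exp C env (If c a b) = (case exec_exp C env c of
      Some (VNat m, t1) \<Rightarrow>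
        (case exec_exp C env (if m \<noteq> 0 then a else b) of
          Some (x, t2) \<Rightarrow> Some (x, Suc (t1 + t2)) | None \<Rightarrow> None)
    | _ \<Rightarrow> None)"
| "exec_exp C env (Let a b) = (case exec_exp C env a of
      Some (x, t1) \<Rightarrow> (case exec_exp C (x # env) b of
        Some (y, t2) \<Rightarrow> Some (y, Suc (t1 + t2)) | None \<Rightarrow> None)
    | None \<Rightarrow> None)"
| "exec_exp C env (Call f as) = (case exec_exps C env as of
      Some (vs, t1) \<Rightarrow> (case C f vs of
        Some (y, t2) \<Rightarrow> Some (y, Suc (t1 + t2)) | None \<Rightarrow> None)
    | None \<Rightarrow> None)"
| "exec_exps C env [] = Some ([], 0)"
| "exec_exps C env (a # as) = (case exec_exp C env a of
      Some (x, t1) \<Rightarrow> (case exec_exps C env as of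
        Some (xs, t2) \<Rightarrow> Some (x # xs, t1 + t2) | None \<Rightarrow> None)
    | None \<Rightarrow> None)"

inductive_cases eval_VarE: "eval P env (Var i) v t"
inductive_cases eval_ConstE: "eval P env (Const n) v t"
inductive_cases eval_ENilE: "eval P env ENil v t"
inductive_cases eval_EConsE: "eval P env (ECons a b) v t"
inductive_cases eval_HdE: "eval P env (Hd a) v t"
inductive_cases eval_TlE: "eval P env (Tl a) v t"
inductive_cases eval_IsNilE: "eval P env (IsNil a) v t"
inductive_cases eval_PlusE: "eval P env (Plus a b) v t"
inductive_cases eval_MinusE: "eval P env (Minus a b) v t"
inductive_cases eval_LessE: "eval P env (Less a b) v t"
inductive_cases eval_EqE: "eval P env (Eq a b) v t"
inductive_cases eval_IfE: "eval P env (If c a b) v t"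
inductive_cases eval_LetE: "eval P env (Let a b) v t"
inductive_cases eval_CallE: "eval P env (Call f as) v t"
inductive_cases evals_NilE: "evals P env [] vs t"
inductive_cases evals_ConsE: "evals P env (a # as) vs t"

lemma eval_deterministic:
  "eval P env e v t \<Longrightarrow> eval P env e v' t' \<Longrightarrow> v' = v \<and> t' = t"
  "evals P env es vs t \<Longrightarrow> evals P env es vs' t' \<Longrightarrow> vs' = vs \<and> t' = t"
  apply (induction arbitrary: v' t' and vs' t' rule: eval_evals.inducts)
  subgoal premises p using p(2) by (rule eval_VarE) auto
  subgoal premises p using p(1) by (rule eval_ConstE) auto
  subgoal premises p using p(1) by (rule eval_ENilE) auto
  subgoal premises p using p(5) by (rule eval_EConsE) (auto dest!: p(2) p(4))
  subgoal premises p using p(3) by (rule eval_HdE) (auto dest!: p(2))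
  subgoal premises p using p(3) by (rule eval_TlE) (auto dest!: p(2))
  subgoal premises p using p(3) by (rule eval_IsNilE) (auto dest!: p(2))
  subgoal premises p using p(5) by (rule eval_PlusE) (auto dest!: p(2) p(4))
  subgoal premises p using p(5) by (rule eval_MinusE) (auto dest!: p(2) p(4))
  subgoal premises p using p(5) by (rule eval_LessE) (auto dest!: p(2) p(4))
  subgoal premises p using p(5) by (rule eval_EqE) (auto dest!: p(2) p(4))
  subgoal premises p using p(6) by (rule eval_IfE) (insert p(3), auto dest!: p(2) p(5))
  subgoal premises p using p(5) by (rule eval_IfE) (auto dest!: p(2) p(4))
  subgoal premises p using p(5) by (rule eval_LetE) (auto dest!: p(2) p(4))
  subgoal premises p using p(6) by (rule eval_CallE) (auto dest!: p(3) p(5))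
  subgoal premises p using p(1) by (rule evals_NilE) auto
  subgoal premises p using p(5) by (rule evals_ConsE) (auto dest!: p(2) p(4))
  done

lemma exec_exp_sound:
  assumes call: "\<And>f vs y t. C f vs = Some (y, t) \<Longrightarrow> f < length P \<and> eval P vs (P ! f) y t"
  shows "exec_exp C env e = Some (v, t) \<Longrightarrow> eval P env e v t"
proof (induction e arbitrary: env v t)
  case (Call f as)
  have "evals P env es vs t" if "set es \<subseteq> set as" "exec_exps C env es = Some (vs, t)" for es vs t
    using that by (induction es arbitrary: vs t)
      (auto split: option.splits intro!: eval_evals.intros(16,17) Call.IH)
  from this[of as] Call.prems show ?case
    by (auto split: option.splits intro!: eval_evals.intros(15) dest!: call)
next
  case (If c a b)
  then obtain m t1 where "exec_exp C env c = Some (VNat m, t1)"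
    by (auto split: option.splits val.splits)
  with If show ?case
    by (cases "m = 0") (auto split: option.splits intro: eval_evals.intros(12,13) If.IH)
qed (auto split: option.splits val.splits if_splits intro!: eval_evals.intros[simplified])

text \<open>Since evaluation is deterministic, a call can be resolved by choice. Executing a function
  body with this oracle by simp, after rewriting every call with an already established
  result, derives its value and cost compositionally.\<close>

definition call_result :: "prog \<Rightarrow> nat \<Rightarrow> val list \<Rightarrow> (val \<times> nat) option" where
  "call_result P f vs = (if f < length P \<and> (\<exists>v t. eval P vs (P ! f) v t)
      then Some (SOME (v, t). eval P vs (P ! f) v t) else None)"

lemma call_result_sound: "call_result P f vs = Some (y, t) \<Longrightarrow> f < length P \<and> eval P vs (P ! f) y t"
  unfolding call_result_def
  by (auto split: if_splits) (metis (mono_tags, lifting) case_prod_conv someI)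

lemma call_result_eq:
  assumes "f < length P" "eval P vs (P ! f) v t"
  shows "call_result P f vs = Some (v, t)"
proof -
  have "(SOME (v, t). eval P vs (P ! f) v t) = (v, t)"
    using assms(2) eval_deterministic(1) by (intro some_equality) auto
  then show ?thesis
    using assms unfolding call_result_def by auto
qed

lemma exec_exp_eval: "exec_exp (call_result P) env e = Some (v, t) \<Longrightarrow> eval P env e v t"
  by (rule exec_exp_sound) (rule call_result_sound)

section \<open>Merge sort and the greedy tour\<close>

fun halve :: "'a list \<Rightarrow> 'a list \<times> 'a list" where
  "halve [] = ([], [])"
| "halve (x # xs) = (case halve xs of (a, b) \<Rightarrow> (x # b, a))"

lemma halve_length:
  "halve xs = (a, b) \<Longrightarrow> length a = (length xs + 1) div 2 \<and> length b = length xs div 2"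
  by (induction xs arbitrary: a b) (auto split: prod.splits)

lemma halve_mset: "halve xs = (a, b) \<Longrightarrow> mset xs = mset a + mset b"
  by (induction xs arbitrary: a b) (auto split: prod.splits)

fun merge_key :: "('a \<Rightarrow> nat) \<Rightarrow> 'a list \<Rightarrow> 'a list \<Rightarrow> 'a list" where
  "merge_key f [] ys = ys"
| "merge_key f xs [] = xs"
| "merge_key f (x # xs) (y # ys) =
     (if f y < f x then y # merge_key f (x # xs) ys else x # merge_key f xs (y # ys))"

lemma mset_merge_key [simp]: "mset (merge_key f xs ys) = mset xs + mset ys"
  by (induction f xs ys rule: merge_key.induct) auto

lemma set_merge_key [simp]: "set (merge_key f xs ys) = set xs \<union> set ys"
  by (metis mset_merge_key set_mset_mset set_mset_union)

lemma sorted_merge_key: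
  "sorted (map f xs) \<Longrightarrow> sorted (map f ys) \<Longrightarrow> sorted (map f (merge_key f xs ys))"
  by (induction f xs ys rule: merge_key.induct) auto

function msort_key :: "('a \<Rightarrow> nat) \<Rightarrow> 'a list \<Rightarrow> 'a list" where
  "msort_key f xs = (if length xs \<le> 1 then xs
     else case halve xs of (a, b) \<Rightarrow> merge_key f (msort_key f a) (msort_key f b))"
  by pat_completeness auto
termination
  by (relation "measure (\<lambda>(_, xs). length xs)") (auto dest!: halve_length[OF sym])

declare msort_key.simps [simp del]

lemma mset_msort_key [simp]: "mset (msort_key f xs) = mset xs"
proof (induction f xs rule: msort_key.induct)
  case (1 f xs)
  then show ?case
    by (subst msort_key.simps) (auto split: prod.splits dest: halve_mset)
qed

lemma set_msort_key [simp]: "set (msort_key f xs) = set xs"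
  by (metis mset_msort_key set_mset_mset)

lemma length_msort_key [simp]: "length (msort_key f xs) = length xs"
  by (metis mset_msort_key size_mset)

lemma sorted_msort_key: "sorted (map f (msort_key f xs))"
proof (induction f xs rule: msort_key.induct)
  case (1 f xs)
  then show ?case
    by (subst msort_key.simps)
      (auto split: prod.splits intro!: sorted_merge_key simp: le_Suc_eq length_Suc_conv)
qed

definition mid_label :: "nat list \<Rightarrow> nat" where
  "mid_label r = hd (tl r)"

text \<open>T is the time of the last return to the centre. Each leaf, given by its sorted labels,
  is visited using its two smallest labels above T, which returns as early as possible; for
  labels x < y < z this is (x, y) if T < x and (y, z) otherwise.\<close>

fun greedy_tour :: "nat \<Rightarrow> nat list list \<Rightarrow> bool" where
  "greedy_tour T [] = True"
| "greedy_tour T ((x # y # zs) # rs) =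
     (if T < x then greedy_tour y rs
      else case zs of [] \<Rightarrow> False | z # _ \<Rightarrow> T < y \<and> greedy_tour z rs)"
| "greedy_tour T (_ # rs) = False"

lemma greedy_tour_ConsE:
  assumes "greedy_tour T (r # rs)" "sorted_wrt (<) r"
  obtains a b where "T < a" "a < b" "a \<in> set r" "b \<in> set r" "greedy_tour b rs"
proof -
  obtain x y zs where r: "r = x # y # zs"
    using assms(1) by (cases r rule: remdups_adj.cases) auto
  show thesis
  proof (cases "T < x")
    case True
    then show thesis using assms r by (intro that[of x y]) auto
  next
    case False
    then obtain z zs' where "zs = z # zs'" "T < y" "greedy_tour z rs"
      using assms(1) r by (auto split: list.splits)
    then show thesis using assms(2) r by (intro that[of y z]) auto
  qed
qed

lemma sorted_two_or_three:
  assumes "sorted_wrt (<) r" "2 \<le> length r" "length r \<le> 3"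
  obtains x y where "r = [x, y]" "x < y"
    | x y z where "r = [x, y, z]" "x < y" "y < z"
  using assms by (auto simp: numeral_eq_Suc le_Suc_eq length_Suc_conv)

section \<open>Explorable stars with at most three labels per edge\<close>

abbreviation time_of :: "'v \<times> 'v \<times> nat \<Rightarrow> nat" where
  "time_of te \<equiv> snd (snd te)"

lemma journey_singleton: "time_edge E L (u, v, l) \<Longrightarrow> journey E L u v [(u, v, l)]"
  unfolding journey_def by auto

lemma journey_Cons:
  assumes "time_edge E L (u, w, l)" "journey E L w v js" "l < time_of (js ! 0)"
  shows "journey E L u v ((u, w, l) # js)"
  using assms unfolding journey_def by (auto simp: nth_Cons split: nat.splits)

lemma journey_times_sorted:
  assumes "journey E L u v js"
  shows "sorted_wrt (<) (map time_of js)"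
  using assms unfolding journey_def by (auto simp: sorted_wrt_iff_nth_Suc_transp)

lemma visited_Cons: "visited (te # js) = {fst te, fst (snd te)} \<union> visited js"
  unfolding visited_def by auto

lemma star_L_leaf: "i < length ls \<Longrightarrow> star_L ls {0, Suc i} = set (ls ! i)"
proof -
  assume i: "i < length ls"
  have "(THE j. 1 \<le> j \<and> j \<le> length ls \<and> {0, Suc i} = {0, j}) = Suc i"
    using i by (intro the_equality) (auto simp: doubleton_eq_iff)
  moreover have "\<exists>j. 1 \<le> j \<and> j \<le> length ls \<and> {0, Suc i} = {0, j}"
    using i by (intro exI[of _ "Suc i"]) auto
  ultimately show ?thesis
    unfolding star_L_def by simp
qed

lemma star_E_iff: "{u, v} \<in> star_E ls \<longleftrightarrow> (\<exists>i < length ls. {u, v} = {0, Suc i})"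
proof
  assume "{u, v} \<in> star_E ls"
  then obtain j where "1 \<le> j" "j \<le> length ls" "{u, v} = {0, j}"
    unfolding star_E_def by auto
  then show "\<exists>i < length ls. {u, v} = {0, Suc i}"
    by (intro exI[of _ "j - 1"]) auto
next
  assume "\<exists>i < length ls. {u, v} = {0, Suc i}"
  then show "{u, v} \<in> star_E ls"
    unfolding star_E_def by force
qed

lemma time_edge_star_iff:
  "time_edge (star_E ls) (star_L ls) (u, v, l) \<longleftrightarrow>
   (\<exists>i < length ls. (u = 0 \<and> v = Suc i \<or> u = Suc i \<and> v = 0) \<and> l \<in> set (ls ! i))"
proof -
  have "time_edge (star_E ls) (star_L ls) (u, v, l) \<longleftrightarrow>
        (\<exists>i < length ls. {u, v} = {0, Suc i} \<and> l \<in> set (ls ! i))"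
    unfolding time_edge_def star_E_iff by (auto simp: star_L_leaf)
  then show ?thesis
    by (simp add: doubleton_eq_iff)
qed

lemma star_journey_visits_leaf:
  assumes j: "journey (star_E ls) (star_L ls) 0 0 js" and v: "Suc i \<in> visited js"
  obtains k a b where "Suc k < length js" "js ! k = (0, Suc i, a)" "js ! Suc k = (Suc i, 0, b)"
    "a \<in> set (ls ! i)" "b \<in> set (ls ! i)"
proof -
  have te: "\<And>k. k < length js \<Longrightarrow> time_edge (star_E ls) (star_L ls) (js ! k)"
    and ch: "\<And>k. Suc k < length js \<Longrightarrow> fst (snd (js ! k)) = fst (js ! Suc k)"
    and first: "fst (js ! 0) = 0" and last: "fst (snd (js ! (length js - 1))) = 0"
    using j unfolding journey_def by auto
  have "\<exists>k. Suc k < length js \<and> fst (snd (js ! k)) = Suc i"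
  proof -
    from v obtain k where k: "k < length js" "fst (js ! k) = Suc i \<or> fst (snd (js ! k)) = Suc i"
      unfolding visited_def by (auto simp: in_set_conv_nth)
    show ?thesis
    proof (cases "fst (snd (js ! k)) = Suc i")
      case True
      with k last have "Suc k < length js"
        by (metis Suc_lessI diff_Suc_1 nat.distinct(1))
      with True show ?thesis by blast
    next
      case False
      with k first obtain k' where "k = Suc k'"
        by (cases k) auto
      with False k ch[of k'] show ?thesis by auto
    qed
  qed
  then obtain k where k: "Suc k < length js" "fst (snd (js ! k)) = Suc i" by blast
  obtain u a where ka: "js ! k = (u, Suc i, a)"
    using k(2) by (cases "js ! k") auto
  obtain w b where kb: "js ! Suc k = (Suc i, w, b)"
    using k ch by (cases "js ! Suc k") auto
  have "u = 0" "a \<in> set (ls ! i)"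
    using te[of k] k(1) ka by (auto simp: time_edge_star_iff)
  moreover have "w = 0" "b \<in> set (ls ! i)"
    using te[of "Suc k"] k(1) kb by (auto simp: time_edge_star_iff)
  ultimately show thesis
    using k(1) ka kb that by blast
qed

lemma star_journey_visit_intervals:
  assumes j: "journey (star_E ls) (star_L ls) 0 0 js" and v: "\<forall>i < length ls. Suc i \<in> visited js"
  obtains a b where "\<And>i. i < length ls \<Longrightarrow> a i < b i \<and> a i \<in> set (ls ! i) \<and> b i \<in> set (ls ! i)"
    and "\<And>i j. i < length ls \<Longrightarrow> j < length ls \<Longrightarrow> i \<noteq> j \<Longrightarrow> b i < a j \<or> b j < a i"
proof -
  define visit where "visit i k \<longleftrightarrow> Suc k < length js \<and>
      js ! k = (0, Suc i, time_of (js ! k)) \<and> js ! Suc k = (Suc i, 0, time_of (js ! Suc k)) \<and>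
      time_of (js ! k) \<in> set (ls ! i) \<and> time_of (js ! Suc k) \<in> set (ls ! i)" for i k
  have "\<exists>k. visit i k" if "i < length ls" for i
  proof -
    from v that have "Suc i \<in> visited js"
      by blast
    then obtain k a b where "Suc k < length js" "js ! k = (0, Suc i, a)"
        "js ! Suc k = (Suc i, 0, b)" "a \<in> set (ls ! i)" "b \<in> set (ls ! i)"
      by (rule star_journey_visits_leaf[OF j])
    then show ?thesis
      unfolding visit_def by auto
  qed
  then obtain K where K: "\<And>i. i < length ls \<Longrightarrow> visit i (K i)"
    by metis
  define a where "a i = time_of (js ! K i)" for i
  define b where "b i = time_of (js ! Suc (K i))" for i
  have times: "k < k' \<Longrightarrow> k' < length js \<Longrightarrow> time_of (js ! k) < time_of (js ! k')" for k k'
    using sorted_wrt_nth_less[OF journey_times_sorted[OF j]] by simp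
  show thesis
  proof
    fix i assume "i < length ls"
    with K[of i] times show "a i < b i \<and> a i \<in> set (ls ! i) \<and> b i \<in> set (ls ! i)"
      unfolding a_def b_def visit_def by simp
  next
    have before: "b i < a j" if "i < length ls" "j < length ls" "K i < K j" for i j
    proof -
      have "Suc (K i) \<noteq> K j"
        using K[OF that(1)] K[OF that(2)] unfolding visit_def by (metis fst_conv nat.distinct(1))
      then show ?thesis
        using that K[OF that(2)] times unfolding a_def b_def visit_def by simp
    qed
    fix i j assume ij: "i < length ls" "j < length ls" "i \<noteq> j"
    then have "K i \<noteq> K j"
      using K[OF ij(1)] K[OF ij(2)] unfolding visit_def by (metis fst_conv snd_conv nat.inject)
    then show "b i < a j \<or> b j < a i"
      using before ij by (meson linorder_neqE_nat)
  qed
qed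

lemma mid_label_between:
  assumes "sorted_wrt (<) r" "length r \<le> 3" "a < b" "a \<in> set r" "b \<in> set r"
  shows "a \<le> mid_label r \<and> mid_label r \<le> b"
proof -
  have "2 \<le> length r"
    using assms(3-5) by (cases r rule: remdups_adj.cases) auto
  from assms(1) this assms(2) show ?thesis
  proof (cases rule: sorted_two_or_three)
  qed (use assms(3-5) in \<open>auto simp: mid_label_def\<close>)
qed

lemma greedy_tour_if_disjoint_visits:
  assumes "distinct xs"
    and "\<And>i. i \<in> set xs \<Longrightarrow> sorted_wrt (<) (R i) \<and> length (R i) \<le> 3 \<and>
                                a i < b i \<and> a i \<in> set (R i) \<and> b i \<in> set (R i)"
    and "\<And>i j. i \<in> set xs \<Longrightarrow> j \<in> set xs \<Longrightarrow> i \<noteq> j \<Longrightarrow> b i < a j \<or> b j < a i"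
    and "sorted (map (\<lambda>i. mid_label (R i)) xs)"
    and "\<And>i. i \<in> set xs \<Longrightarrow> T < a i"
  shows "greedy_tour T (map R xs)"
  using assms
proof (induction xs arbitrary: T)
  case Nil
  then show ?case by simp
next
  case (Cons i xs)
  have Ri: "sorted_wrt (<) (R i)" "length (R i) \<le> 3" "a i < b i" "a i \<in> set (R i)" "b i \<in> set (R i)"
    using Cons.prems(2) by auto
  have mid: "a j \<le> mid_label (R j) \<and> mid_label (R j) \<le> b j" if "j \<in> set (i # xs)" for j
    using Cons.prems(2)[OF that] mid_label_between by blast
  have later: "b i < a j" if j: "j \<in> set xs" for j
  proof -
    have "mid_label (R i) \<le> mid_label (R j)"
      using Cons.prems(4) j by auto
    moreover have "b i < a j \<or> b j < a i"
      using Cons.prems(1,3) j by auto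
    ultimately show ?thesis
      using mid[of i] mid[of j] j by auto
  qed
  have rest: "greedy_tour T' (map R xs)" if "T' \<le> b i" for T'
  proof -
    have "\<And>j. j \<in> set xs \<Longrightarrow> T' < a j"
      using later that by (meson le_less_trans)
    with Cons.prems show ?thesis
      by (intro Cons.IH) auto
  qed
  have "2 \<le> length (R i)"
    using Ri(3-5) by (cases "R i" rule: remdups_adj.cases) auto
  from Ri(1) this Ri(2) show ?case
  proof (cases rule: sorted_two_or_three)
    case (1 x y)
    then show ?thesis
      using Ri(3-5) Cons.prems(5) rest[of y] by auto
  next
    case (2 x y z)
    then show ?thesis
      using Ri(3-5) Cons.prems(5) rest[of y] rest[of z] by auto
  qed
qed

lemma journey_of_greedy_tour:
  assumes "greedy_tour T (map (\<lambda>i. sort (ls ! i)) xs)" "xs \<noteq> []"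
    and "\<And>i. i \<in> set xs \<Longrightarrow> i < length ls \<and> distinct (ls ! i)"
  shows "\<exists>js. journey (star_E ls) (star_L ls) 0 0 js \<and> T < time_of (js ! 0) \<and>
    Suc ` set xs \<subseteq> visited js"
  using assms
proof (induction xs arbitrary: T)
  case Nil
  then show ?case by simp
next
  case (Cons i xs)
  have i: "i < length ls" "sorted_wrt (<) (sort (ls ! i))"
    using Cons.prems(3) by (auto simp: strict_sorted_iff)
  obtain a b where ab: "T < a" "a < b" "a \<in> set (ls ! i)" "b \<in> set (ls ! i)"
    and rest: "greedy_tour b (map (\<lambda>i. sort (ls ! i)) xs)"
    using Cons.prems(1) i(2) by (auto elim: greedy_tour_ConsE)
  have enter: "time_edge (star_E ls) (star_L ls) (0, Suc i, a)"
    and leave: "time_edge (star_E ls) (star_L ls) (Suc i, 0, b)"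
    using i ab by (auto simp: time_edge_star_iff)
  show ?case
  proof (cases "xs = []")
    case True
    have "journey (star_E ls) (star_L ls) 0 0 [(0, Suc i, a), (Suc i, 0, b)]"
      using journey_Cons[OF enter journey_singleton[OF leave]] ab by simp
    with True ab show ?thesis
      by (intro exI[of _ "[(0, Suc i, a), (Suc i, 0, b)]"]) (auto simp: visited_Cons)
  next
    case False
    then obtain js where js: "journey (star_E ls) (star_L ls) 0 0 js" "b < time_of (js ! 0)"
        "Suc ` set xs \<subseteq> visited js"
      using Cons.IH[OF rest] Cons.prems(3) by auto
    have "journey (star_E ls) (star_L ls) 0 0 ((0, Suc i, a) # (Suc i, 0, b) # js)"
      using journey_Cons[OF enter journey_Cons[OF leave js(1,2)]] ab by simp
    with js ab show ?thesis
      by (intro exI[of _ "(0, Suc i, a) # (Suc i, 0, b) # js"]) (auto simp: visited_Cons)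
  qed
qed

lemma explorable_iff_greedy_tour:
  assumes "star_input 3 ls"
  shows "explorable (star_V ls) (star_E ls) (star_L ls) 0 \<longleftrightarrow>
    (\<forall>r\<in>set ls. 2 \<le> length r) \<and> greedy_tour 0 (msort_key mid_label (map sort ls))"
proof -
  define R where "R i = sort (ls ! i)" for i
  have "ls \<noteq> []" and labels: "\<And>i. i < length ls \<Longrightarrow>
      distinct (ls ! i) \<and> length (ls ! i) \<le> 3 \<and> (\<forall>l\<in>set (ls ! i). 0 < l)"
    using assms unfolding star_input_def by auto
  have "map R [0..<length ls] = map sort ls"
    unfolding R_def by (rule nth_equalityI) auto
  then have "mset (msort_key mid_label (map sort ls)) = mset (map R [0..<length ls])"
    by simp
  then obtain p where "p permutes {..<length (map R [0..<length ls])}"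
      "permute_list p (map R [0..<length ls]) = msort_key mid_label (map sort ls)"
    by (rule mset_eq_permutation)
  then have p: "p permutes {..<length ls}"
      "permute_list p (map R [0..<length ls]) = msort_key mid_label (map sort ls)"
    by simp_all
  define xs where "xs = permute_list p [0..<length ls]"
  have sorted_rs: "msort_key mid_label (map sort ls) = map R xs"
    using p unfolding xs_def by (simp add: permute_list_map)
  have "mset xs = mset [0..<length ls]"
    using p(1) unfolding xs_def by (simp add: mset_permute_list del: mset_upt)
  then have set_xs: "set xs = {0..<length ls}" and "distinct xs"
    using mset_eq_setD mset_eq_imp_distinct_iff by fastforce+
  have "sorted (map (\<lambda>i. mid_label (R i)) xs)"
    using sorted_msort_key[of mid_label "map sort ls"] unfolding sorted_rs by (simp add: comp_def)
  show ?thesis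
  proof
    assume "explorable (star_V ls) (star_E ls) (star_L ls) 0"
    then obtain js where js: "journey (star_E ls) (star_L ls) 0 0 js" "star_V ls \<subseteq> visited js"
      unfolding explorable_def by blast
    then have "\<forall>i < length ls. Suc i \<in> visited js"
      unfolding star_V_def by auto
    with js(1) obtain a b where
      ab: "\<And>i. i < length ls \<Longrightarrow> a i < b i \<and> a i \<in> set (ls ! i) \<and> b i \<in> set (ls ! i)"
      and disjoint: "\<And>i j. i < length ls \<Longrightarrow> j < length ls \<Longrightarrow> i \<noteq> j \<Longrightarrow> b i < a j \<or> b j < a i"
      by (rule star_journey_visit_intervals) blast
    have "2 \<le> length (ls ! i)" if "i < length ls" for i
    proof -
      have "card {a i, b i} \<le> card (set (ls ! i))"
        using ab[OF that] by (intro card_mono) auto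
      also have "\<dots> \<le> length (ls ! i)"
        by (rule card_length)
      finally show ?thesis
        using ab[OF that] by simp
    qed
    then have "\<forall>r\<in>set ls. 2 \<le> length r"
      by (auto simp: in_set_conv_nth)
    moreover have "greedy_tour 0 (map R xs)"
      using \<open>distinct xs\<close> _ _ \<open>sorted (map (\<lambda>i. mid_label (R i)) xs)\<close>
    proof (rule greedy_tour_if_disjoint_visits)
      fix i assume "i \<in> set xs"
      then show "sorted_wrt (<) (R i) \<and> length (R i) \<le> 3 \<and>
          a i < b i \<and> a i \<in> set (R i) \<and> b i \<in> set (R i)"
        and "0 < a i"
        using labels ab set_xs unfolding R_def by (auto simp: strict_sorted_iff)
    next
      fix i j assume "i \<in> set xs" "j \<in> set xs" "i \<noteq> j"
      then show "b i < a j \<or> b j < a i"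
        using disjoint set_xs by auto
    qed
    ultimately show "(\<forall>r\<in>set ls. 2 \<le> length r) \<and> greedy_tour 0 (msort_key mid_label (map sort ls))"
      unfolding sorted_rs by blast
  next
    assume "(\<forall>r\<in>set ls. 2 \<le> length r) \<and> greedy_tour 0 (msort_key mid_label (map sort ls))"
    then have "greedy_tour 0 (map (\<lambda>i. sort (ls ! i)) xs)"
      unfolding sorted_rs R_def by simp
    moreover have "xs \<noteq> []"
      using set_xs \<open>ls \<noteq> []\<close> by auto
    ultimately obtain js where js: "journey (star_E ls) (star_L ls) 0 0 js"
        "Suc ` set xs \<subseteq> visited js"
      using journey_of_greedy_tour[of 0 ls xs] set_xs labels by auto
    have "js ! 0 \<in> set js" "fst (js ! 0) = 0"
      using js(1) unfolding journey_def by auto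
    then have "0 \<in> visited js"
      unfolding visited_def by force
    have "star_V ls \<subseteq> visited js"
    proof
      fix v assume "v \<in> star_V ls"
      then have "v = 0 \<or> v \<in> Suc ` set xs"
        unfolding star_V_def set_xs by (cases v) auto
      with \<open>0 \<in> visited js\<close> js(2) show "v \<in> visited js"
        by blast
    qed
    with js(1) show "explorable (star_V ls) (star_E ls) (star_L ls) 0"
      unfolding explorable_def by blast
  qed
qed

section \<open>The program and its running time\<close>

definition enc_nats :: "nat list \<Rightarrow> val" where
  "enc_nats xs = enc_list (map VNat xs)"

definition enc_lists :: "nat list list \<Rightarrow> val" where
  "enc_lists rs = enc_list (map enc_nats rs)"

lemma enc_nats_simps [simp]:
  "enc_nats [] = VNil" "enc_nats (x # xs) = VCons (VNat x) (enc_nats xs)"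
  by (simp_all add: enc_nats_def enc_list_def)

lemma enc_lists_simps [simp]:
  "enc_lists [] = VNil" "enc_lists (r # rs) = VCons (enc_nats r) (enc_lists rs)"
  by (simp_all add: enc_lists_def enc_list_def)

lemma enc_nats_eq_VNil_iff [simp]: "enc_nats xs = VNil \<longleftrightarrow> xs = []"
  by (cases xs) auto

lemma enc_lists_eq_VNil_iff [simp]: "enc_lists rs = VNil \<longleftrightarrow> rs = []"
  by (cases rs) auto

lemma enc_input_eq_enc_lists: "enc_input ls = enc_lists ls"
  by (simp add: enc_input_def enc_lists_def enc_nats_def[abs_def])

text \<open>Call k invokes the k-th body of explore_prog. Within a body, Var 0, Var 1, ... are the
  arguments, and every enclosing Let shifts them by one.\<close>

definition main_body :: exp where
  "main_body = Let (Call 1 [Var 0])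
     (If (Call 4 [Var 0]) (Call 8 [Const 0, Call 5 [Var 0]]) (Const 0))"

definition sort_each_body :: exp where
  "sort_each_body = If (IsNil (Var 0)) ENil (ECons (Call 2 [Hd (Var 0)]) (Call 1 [Tl (Var 0)]))"

definition isort_body :: exp where
  "isort_body = If (IsNil (Var 0)) ENil (Call 3 [Hd (Var 0), Call 2 [Tl (Var 0)]])"

definition insort_body :: exp where
  "insort_body = If (IsNil (Var 1)) (ECons (Var 0) ENil)
     (If (Less (Hd (Var 1)) (Var 0)) (ECons (Hd (Var 1)) (Call 3 [Var 0, Tl (Var 1)]))
       (ECons (Var 0) (Var 1)))"

definition all_two_labels_body :: exp where
  "all_two_labels_body = If (IsNil (Var 0)) (Const 1)
     (If (IsNil (Hd (Var 0))) (Const 0)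
       (If (IsNil (Tl (Hd (Var 0)))) (Const 0) (Call 4 [Tl (Var 0)])))"

definition msort_body :: exp where
  "msort_body = If (IsNil (Var 0)) (Var 0)
     (If (IsNil (Tl (Var 0))) (Var 0)
       (Let (Call 6 [Var 0]) (Call 7 [Call 5 [Hd (Var 0)], Call 5 [Tl (Var 0)]])))"

definition halve_body :: exp where
  "halve_body = If (IsNil (Var 0)) (ECons ENil ENil)
     (Let (Call 6 [Tl (Var 0)]) (ECons (ECons (Hd (Var 1)) (Tl (Var 0))) (Hd (Var 0))))"

definition merge_body :: exp where
  "merge_body = If (IsNil (Var 0)) (Var 1)
     (If (IsNil (Var 1)) (Var 0)
       (If (Less (Hd (Tl (Hd (Var 1)))) (Hd (Tl (Hd (Var 0)))))
         (ECons (Hd (Var 1)) (Call 7 [Var 0, Tl (Var 1)]))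
         (ECons (Hd (Var 0)) (Call 7 [Tl (Var 0), Var 1]))))"

definition greedy_body :: exp where
  "greedy_body = If (IsNil (Var 1)) (Const 1)
     (Let (Hd (Var 1))
       (If (Less (Var 1) (Hd (Var 0))) (Call 8 [Hd (Tl (Var 0)), Tl (Var 2)])
         (If (IsNil (Tl (Tl (Var 0)))) (Const 0)
           (If (Less (Var 1) (Hd (Tl (Var 0)))) (Call 8 [Hd (Tl (Tl (Var 0))), Tl (Var 2)])
             (Const 0)))))"

definition explore_prog :: prog where
  "explore_prog = [main_body, sort_each_body, isort_body, insort_body, all_two_labels_body,
     msort_body, halve_body, merge_body, greedy_body]"

lemma explore_prog_nth [simp]:
  "explore_prog ! 0 = main_body" "explore_prog ! Suc 0 = sort_each_body"
  "explore_prog ! 2 = isort_body" "explore_prog ! 3 = insort_body"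
  "explore_prog ! 4 = all_two_labels_body" "explore_prog ! 5 = msort_body"
  "explore_prog ! 6 = halve_body" "explore_prog ! 7 = merge_body" "explore_prog ! 8 = greedy_body"
  by (simp_all add: explore_prog_def)

lemma length_explore_prog [simp]: "length explore_prog = 9"
  by (simp add: explore_prog_def)

definition computes_within :: "nat \<Rightarrow> val list \<Rightarrow> val \<Rightarrow> nat \<Rightarrow> bool" where
  "computes_within f args v B \<longleftrightarrow> (\<exists>t. eval explore_prog args (explore_prog ! f) v t \<and> t \<le> B)"

lemma computes_withinI:
  "\<exists>t. exec_exp (call_result explore_prog) args (explore_prog ! f) = Some (v, t) \<and> t \<le> B \<Longrightarrow>
   computes_within f args v B"
  unfolding computes_within_def using exec_exp_eval by blast

lemma computes_withinE:
  assumes "computes_within f args v B" "f < 9"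
  obtains t where "call_result explore_prog f args = Some (v, t)" "t \<le> B"
  using assms call_result_eq unfolding computes_within_def by fastforce

lemma insort_computes:
  "computes_within 3 [VNat x, enc_nats ys] (enc_nats (insort x ys)) (20 * length ys + 20)"
proof (induction ys)
  case Nil
  show ?case
    by (rule computes_withinI) (simp add: insort_body_def bool_val_def)
next
  case (Cons y ys)
  then obtain t where
      "call_result explore_prog 3 [VNat x, enc_nats ys] = Some (enc_nats (insort x ys), t)"
      "t \<le> 20 * length ys + 20"
    by (auto elim: computes_withinE)
  then show ?case
    by (intro computes_withinI) (simp add: insort_body_def bool_val_def)
qed

lemma isort_computes:
  "computes_within 2 [enc_nats xs] (enc_nats (sort xs)) (30 * (length xs + 1) ^ 2)"
proof (induction xs)
  case Nil
  show ?case
    by (rule computes_withinI) (simp add: isort_body_def bool_val_def)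
next
  case (Cons x xs)
  then obtain t where "call_result explore_prog 2 [enc_nats xs] = Some (enc_nats (sort xs), t)"
      "t \<le> 30 * (length xs + 1) ^ 2"
    by (auto elim: computes_withinE)
  moreover obtain t' where
    "call_result explore_prog 3 [VNat x, enc_nats (sort xs)] =
       Some (enc_nats (insort x (sort xs)), t')"
    "t' \<le> 20 * length xs + 20"
    using insort_computes[of x "sort xs"] by (auto elim: computes_withinE)
  ultimately show ?case
    by (intro computes_withinI)
      (simp add: isort_body_def bool_val_def power2_eq_square algebra_simps)
qed

lemma sort_each_computes:
  "\<forall>r\<in>set ls. length r \<le> 3 \<Longrightarrow>
   computes_within 1 [enc_lists ls] (enc_lists (map sort ls)) (500 * length ls + 10)"
proof (induction ls)
  case Nil
  show ?case
    by (rule computes_withinI) (simp add: sort_each_body_def bool_val_def)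
next
  case (Cons r ls)
  then obtain t where
      "call_result explore_prog 1 [enc_lists ls] = Some (enc_lists (map sort ls), t)"
      "t \<le> 500 * length ls + 10"
    by (auto elim: computes_withinE)
  moreover obtain t' where "call_result explore_prog 2 [enc_nats r] = Some (enc_nats (sort r), t')"
      "t' \<le> 30 * (length r + 1) ^ 2"
    using isort_computes[of r] by (auto elim: computes_withinE)
  moreover have "30 * (length r + 1) ^ 2 \<le> 30 * 4 ^ 2"
    using Cons.prems by (intro mult_le_mono2 power_mono) auto
  ultimately show ?case
    by (intro computes_withinI) (simp add: sort_each_body_def bool_val_def)
qed

lemma all_two_labels_computes:
  "computes_within 4 [enc_lists rs] (bool_val (\<forall>r\<in>set rs. 2 \<le> length r)) (30 * length rs + 10)"
proof (induction rs)
  case Nil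
  show ?case
    by (rule computes_withinI) (simp add: all_two_labels_body_def bool_val_def)
next
  case (Cons r rs)
  then obtain t where "call_result explore_prog 4 [enc_lists rs] =
      Some (bool_val (\<forall>r\<in>set rs. 2 \<le> length r), t)"
      "t \<le> 30 * length rs + 10"
    by (auto elim: computes_withinE)
  then show ?case
    by (intro computes_withinI)
      (cases r rule: remdups_adj.cases; simp add: all_two_labels_body_def bool_val_def)
qed

lemma greedy_computes:
  "\<forall>r\<in>set rs. 2 \<le> length r \<Longrightarrow>
   computes_within 8 [VNat T, enc_lists rs] (bool_val (greedy_tour T rs)) (50 * length rs + 10)"
proof (induction rs arbitrary: T)
  case Nil
  show ?case
    by (rule computes_withinI) (simp add: greedy_body_def bool_val_def)
next
  case (Cons r rs)
  obtain x y zs where r: "r = x # y # zs"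
    using Cons.prems by (cases r rule: remdups_adj.cases) auto
  have rest: "\<exists>t. call_result explore_prog 8 [VNat T', enc_lists rs] =
      Some (bool_val (greedy_tour T' rs), t) \<and> t \<le> 50 * length rs + 10" for T'
  proof -
    have "computes_within 8 [VNat T', enc_lists rs] (bool_val (greedy_tour T' rs))
        (50 * length rs + 10)"
      using Cons by simp
    then show ?thesis
      by (auto elim: computes_withinE)
  qed
  show ?case
  proof (cases "T < x")
    case True
    with r rest[of y] show ?thesis
      by (intro computes_withinI) (auto simp add: greedy_body_def bool_val_def)
  next
    case False
    with r rest[of "hd zs"] show ?thesis
      by (intro computes_withinI) (cases zs; auto simp add: greedy_body_def bool_val_def)
  qed
qed

lemma halve_computes:
  "computes_within 6 [enc_lists xs] (case halve xs of (a, b) \<Rightarrow> VCons (enc_lists a) (enc_lists b))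
     (20 * length xs + 10)"
proof (induction xs)
  case Nil
  show ?case
    by (rule computes_withinI) (simp add: halve_body_def bool_val_def)
next
  case (Cons x xs)
  obtain a b where ab: "halve xs = (a, b)"
    by fastforce
  with Cons obtain t where
      "call_result explore_prog 6 [enc_lists xs] = Some (VCons (enc_lists a) (enc_lists b), t)"
      "t \<le> 20 * length xs + 10"
    by (auto elim: computes_withinE)
  with ab show ?case
    by (intro computes_withinI) (simp add: halve_body_def bool_val_def)
qed

lemma merge_computes:
  "\<forall>r\<in>set xs \<union> set ys. 2 \<le> length r \<Longrightarrow>
   computes_within 7 [enc_lists xs, enc_lists ys] (enc_lists (merge_key mid_label xs ys))
     (40 * (length xs + length ys) + 10)"
proof (induction mid_label xs ys rule: merge_key.induct)
  case (1 ys)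
  show ?case
    by (rule computes_withinI) (simp add: merge_body_def bool_val_def)
next
  case (2 x xs)
  show ?case
    by (rule computes_withinI) (simp add: merge_body_def bool_val_def)
next
  case (3 x xs y ys)
  obtain x1 x2 xr where x: "x = x1 # x2 # xr"
    using "3"(3) by (cases x rule: remdups_adj.cases) auto
  obtain y1 y2 yr where y: "y = y1 # y2 # yr"
    using "3"(3) by (cases y rule: remdups_adj.cases) auto
  show ?case
  proof (cases "mid_label y < mid_label x")
    case True
    with "3"(1) "3"(3) obtain t where
      "call_result explore_prog 7 [enc_lists (x # xs), enc_lists ys] =
         Some (enc_lists (merge_key mid_label (x # xs) ys), t)"
      "t \<le> 40 * (length (x # xs) + length ys) + 10"
      by (auto elim: computes_withinE)
    with True x y show ?thesis
      by (intro computes_withinI) (simp add: merge_body_def bool_val_def mid_label_def)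
  next
    case False
    with "3"(2) "3"(3) obtain t where
      "call_result explore_prog 7 [enc_lists xs, enc_lists (y # ys)] =
         Some (enc_lists (merge_key mid_label xs (y # ys)), t)"
      "t \<le> 40 * (length xs + length (y # ys)) + 10"
      by (auto elim: computes_withinE)
    with False x y show ?thesis
      by (intro computes_withinI) (simp add: merge_body_def bool_val_def mid_label_def)
  qed
qed

lemma halves_cost_le:
  fixes h1 h2 l1 l2 :: nat
  assumes "h1 + h2 = n" "l2 \<le> l1"
  shows "h1 * l1 + h2 * l2 + n \<le> n * Suc l1"
proof -
  have "h2 * l2 \<le> h2 * l1"
    using assms(2) by simp
  moreover have "n * Suc l1 = h1 * l1 + h2 * l1 + n"
    unfolding assms(1)[symmetric] by (simp add: algebra_simps)
  ultimately show ?thesis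
    by linarith
qed

lemma msort_computes:
  "\<forall>r\<in>set xs. 2 \<le> length r \<Longrightarrow>
   computes_within 5 [enc_lists xs] (enc_lists (msort_key mid_label xs))
     (100 * length xs * ceillog2 (length xs) + 20)"
proof (induction mid_label xs rule: msort_key.induct)
  case (1 xs)
  show ?case
  proof (cases "length xs \<le> 1")
    case True
    then have "msort_key mid_label xs = xs"
      by (subst msort_key.simps) simp
    moreover have "xs = [] \<or> (\<exists>r. xs = [r])"
      using True by (cases xs) auto
    ultimately show ?thesis
      by (elim disjE exE) (intro computes_withinI; simp add: msort_body_def bool_val_def)+
  next
    case False
    obtain a b where ab: "halve xs = (a, b)"
      by fastforce
    have sorted_xs:
      "msort_key mid_label xs = merge_key mid_label (msort_key mid_label a) (msort_key mid_label b)"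
      using False ab by (subst msort_key.simps) simp
    have len: "length a = (length xs + 1) div 2" "length b = length xs div 2"
      using halve_length[OF ab] by auto
    have sub: "set a \<subseteq> set xs" "set b \<subseteq> set xs"
      using halve_mset[OF ab] by (metis Un_iff set_mset_mset set_mset_union subsetI)+
    have "computes_within 5 [enc_lists a] (enc_lists (msort_key mid_label a))
        (100 * length a * ceillog2 (length a) + 20)"
      using "1"(1)[OF False ab[symmetric]] "1"(3) sub by blast
    then obtain ta where
      ta: "call_result explore_prog 5 [enc_lists a] = Some (enc_lists (msort_key mid_label a), ta)"
        "ta \<le> 100 * length a * ceillog2 (length a) + 20"
      by (auto elim: computes_withinE)
    have "computes_within 5 [enc_lists b] (enc_lists (msort_key mid_label b))
        (100 * length b * ceillog2 (length b) + 20)"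
      using "1"(2)[OF False ab[symmetric]] "1"(3) sub by blast
    then obtain tb where
      tb: "call_result explore_prog 5 [enc_lists b] = Some (enc_lists (msort_key mid_label b), tb)"
        "tb \<le> 100 * length b * ceillog2 (length b) + 20"
      by (auto elim: computes_withinE)
    obtain th where
      th: "call_result explore_prog 6 [enc_lists xs] = Some (VCons (enc_lists a) (enc_lists b), th)"
        "th \<le> 20 * length xs + 10"
      using halve_computes[of xs] ab by (auto elim: computes_withinE)
    have "length a + length b = length xs"
      using len by presburger
    moreover have "\<forall>r\<in>set (msort_key mid_label a) \<union> set (msort_key mid_label b). 2 \<le> length r"
      using "1"(3) sub by auto
    ultimately have "computes_within 7
        [enc_lists (msort_key mid_label a), enc_lists (msort_key mid_label b)]
        (enc_lists (msort_key mid_label xs)) (40 * length xs + 10)"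
      using merge_computes[of "msort_key mid_label a" "msort_key mid_label b"] sorted_xs
      by (simp add: add_mult_distrib2)
    then obtain tm where tm: "call_result explore_prog 7
        [enc_lists (msort_key mid_label a), enc_lists (msort_key mid_label b)] =
        Some (enc_lists (msort_key mid_label xs), tm)" "tm \<le> 40 * length xs + 10"
      by (auto elim: computes_withinE)
    have "length a * ceillog2 (length a) + length b * ceillog2 (length b) + length xs
        \<le> length xs * ceillog2 (length xs)"
      using halves_cost_le[of "length a" "length b" "length xs"
          "ceillog2 (length b)" "ceillog2 (length a)"]
        ceillog2_mono[of "length b" "length a"] ceillog2_rec[of "length xs"] False len by simp
    then have "th + ta + tb + tm + 30 \<le> 100 * length xs * ceillog2 (length xs) + 20"
      using ta(2) tb(2) th(2) tm(2) False by linarith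
    moreover obtain r1 r2 rs where "xs = r1 # r2 # rs"
      using False by (cases xs rule: remdups_adj.cases) auto
    ultimately show ?thesis
      using ta(1) tb(1) th(1) tm(1)
      by (intro computes_withinI) (simp add: msort_body_def bool_val_def)
  qed
qed

lemma main_computes:
  assumes "\<forall>r\<in>set ls. length r \<le> 3"
  shows "computes_within 0 [enc_lists ls]
    (bool_val ((\<forall>r\<in>set ls. 2 \<le> length r) \<and> greedy_tour 0 (msort_key mid_label (map sort ls))))
    (100 * length ls * ceillog2 (length ls) + 600 * length ls + 100)"
proof -
  let ?rs = "map sort ls"
  obtain t1 where t1: "call_result explore_prog 1 [enc_lists ls] = Some (enc_lists ?rs, t1)"
      "t1 \<le> 500 * length ls + 10"
    using sort_each_computes[OF assms] by (auto elim: computes_withinE)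
  obtain t2 where t2: "call_result explore_prog 4 [enc_lists ?rs] =
      Some (bool_val (\<forall>r\<in>set ls. 2 \<le> length r), t2)"
      "t2 \<le> 30 * length ls + 10"
    using all_two_labels_computes[of ?rs] by (auto elim: computes_withinE)
  show ?thesis
  proof (cases "\<forall>r\<in>set ls. 2 \<le> length r")
    case False
    with t1 t2 show ?thesis
      by (intro computes_withinI) (simp add: main_body_def bool_val_def)
  next
    case True
    then have "\<forall>r\<in>set ?rs. 2 \<le> length r" "\<forall>r\<in>set (msort_key mid_label ?rs). 2 \<le> length r"
      by auto
    then have "computes_within 5 [enc_lists ?rs] (enc_lists (msort_key mid_label ?rs))
        (100 * length ls * ceillog2 (length ls) + 20)"
      and "computes_within 8 [VNat 0, enc_lists (msort_key mid_label ?rs)]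
        (bool_val (greedy_tour 0 (msort_key mid_label ?rs))) (50 * length ls + 10)"
      using msort_computes[of ?rs] greedy_computes[of "msort_key mid_label ?rs" 0] by simp_all
    then obtain t3 t4 where
      "call_result explore_prog 5 [enc_lists ?rs] = Some (enc_lists (msort_key mid_label ?rs), t3)"
      "t3 \<le> 100 * length ls * ceillog2 (length ls) + 20"
      "call_result explore_prog 8 [VNat 0, enc_lists (msort_key mid_label ?rs)] =
          Some (bool_val (greedy_tour 0 (msort_key mid_label ?rs)), t4)"
      "t4 \<le> 50 * length ls + 10"
      by (auto elim!: computes_withinE)
    with True t1 t2 show ?thesis
      by (intro computes_withinI) (simp add: main_body_def bool_val_def)
  qed
qed

lemma main_cost_le:
  assumes "1 \<le> m"
  shows "real (100 * m * ceillog2 m + 600 * m + 100) \<le>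
    800 * real (m + 1) * log 2 (real (m + 1)) + 800"
proof -
  define L where "L = log 2 (real (m + 1))"
  have "1 \<le> L"
    using assms unfolding L_def by simp
  have "real (ceillog2 m) < log 2 (real m) + 1"
    using assms by (intro ceillog2_less_log) simp
  also have "\<dots> \<le> L + 1"
    using assms unfolding L_def by simp
  finally have "real m * real (ceillog2 m) \<le> real (m + 1) * (2 * L)"
    using \<open>1 \<le> L\<close> by (intro mult_mono) auto
  moreover have "real m \<le> real (m + 1) * L"
    using \<open>1 \<le> L\<close> mult_mono[of "real m" "real (m + 1)" 1 L] by simp
  moreover have "real (100 * m * ceillog2 m + 600 * m + 100) =
      100 * (real m * real (ceillog2 m)) + 600 * real m + 100"
    by simp
  ultimately have "real (100 * m * ceillog2 m + 600 * m + 100)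
      \<le> 100 * (real (m + 1) * (2 * L)) + 600 * (real (m + 1) * L) + 100"
    by linarith
  also have "\<dots> = 800 * real (m + 1) * L + 100"
    by (simp add: algebra_simps)
  finally show ?thesis
    unfolding L_def by simp
qed

theorem corollary1:
  shows "\<exists>(P :: prog) (c :: real). \<forall>ls. star_input 3 ls \<longrightarrow>
           (let n = length ls + 1 in
             \<exists>t. run P (enc_input ls)
                   (bool_val (explorable (star_V ls) (star_E ls) (star_L ls) 0)) t
                 \<and> real t \<le> c * real n * log 2 (real n) + c)"
proof (intro exI allI impI)
  fix ls assume input: "star_input 3 ls"
  then have "\<forall>r\<in>set ls. length r \<le> 3" "1 \<le> length ls"
    unfolding star_input_def by (auto simp: Suc_le_eq)
  then obtain t where t: "eval explore_prog [enc_lists ls] (explore_prog ! 0)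
      (bool_val (explorable (star_V ls) (star_E ls) (star_L ls) 0)) t"
      "t \<le> 100 * length ls * ceillog2 (length ls) + 600 * length ls + 100"
    using main_computes unfolding computes_within_def explorable_iff_greedy_tour[OF input] by blast
  have "real t \<le> real (100 * length ls * ceillog2 (length ls) + 600 * length ls + 100)"
    using t(2) by (simp only: of_nat_le_iff)
  also have "\<dots> \<le> 800 * real (length ls + 1) * log 2 (real (length ls + 1)) + 800"
    using \<open>1 \<le> length ls\<close> by (rule main_cost_le)
  finally have "real t \<le> 800 * real (length ls + 1) * log 2 (real (length ls + 1)) + 800" .
  moreover have
    "run explore_prog (enc_input ls) (bool_val (explorable (star_V ls) (star_E ls) (star_L ls) 0)) t"
    using t(1) unfolding run_def enc_input_eq_enc_lists by (simp add: explore_prog_def)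
  ultimately show "let n = length ls + 1 in \<exists>t. run explore_prog (enc_input ls)
      (bool_val (explorable (star_V ls) (star_E ls) (star_L ls) 0)) t \<and>
      real t \<le> 800 * real n * log 2 (real n) + 800"
    unfolding Let_def by blast
qed

end
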